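(* For every three-qubit state $\rho_{ABC}$, $$S^{\max}_{total}(\rho_{ABC})+\tau(\rho_{ABC})\le 3,$$ where $S^{\max}_{total}(\rho_{ABC})=\max\{S_{AB}+S_{AC},\,S_{AB}+S_{BC},\,S_{AC}+S_{BC}\}$.
   Context: For a two-qubit state $\rho$ let $t_{kl}=\mathrm{Tr}[\rho\,\sigma_k\otimes\sigma_l]$ ($\sigma_k$ Pauli matrices) and $S(\rho)=\sum_{k,l=1}^3 t_{kl}^2$; $S_{ij}=S(\rho_{ij})$ for the two-qubit reduced states $\rho_{ij}$ of $\rho_{ABC}$. $\tau$ is the three-tangle: for a pure state, $\tau=1-|\vec a|^2-\mathcal C_{AB}^2-\mathcal C_{AC}^2$, where $\vec a$ with $a_k=\mathrm{Tr}[\rho_A\sigma_k]$ is the Bloch vector of qubit $A$ and $\mathcal C_{ij}$ is the Wootters concurrence of $\rho_{ij}$ ($\mathcal C(\rho)=\max\{0,\lambda_1-\lambda_2-\lambda_3-\lambda_4\}$, $\lambda_i$ the decreasingly ordered square roots of the eigenvalues of $\rho(\sigma_2\otimes\sigma_2)\rho^*(\sigma_2\otimes\sigma_2)$); for a mixed state $\tau$ is the convex roof, i.e. the minimum of $\sum_n p_n\tau(\psi_n)$ over pure-state decompositions $\rho=\sum_n p_n|\psi_n\rangle\langle\psi_n|$. *)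

theory Defs
  imports "Jordan_Normal_Form.Char_Poly" "HOL-Library.Multiset"
begin

definition pauli :: "nat \<Rightarrow> complex mat" where
  "pauli k = (if k = 1 then mat_of_rows_list 2 [[0, 1], [1, 0]]
              else if k = 2 then mat_of_rows_list 2 [[0, - \<i>], [\<i>, 0]]
              else if k = 3 then mat_of_rows_list 2 [[1, 0], [0, -1]]
              else 1\<^sub>m 2)"

(* tensor product of two 2x2 matrices; basis index of |a b> is 2a+b *)
definition kron2 :: "complex mat \<Rightarrow> complex mat \<Rightarrow> complex mat" where
  "kron2 A B = mat 4 4 (\<lambda>(i, j). A $$ (i div 2, j div 2) * B $$ (i mod 2, j mod 2))"

definition mtrace :: "complex mat \<Rightarrow> complex" where
  "mtrace A = (\<Sum>i<dim_row A. A $$ (i, i))"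

definition density_op :: "nat \<Rightarrow> complex mat \<Rightarrow> bool" where
  "density_op n \<rho> \<longleftrightarrow> \<rho> \<in> carrier_mat n n
     \<and> (\<forall>i<n. \<forall>j<n. \<rho> $$ (i, j) = cnj (\<rho> $$ (j, i)))
     \<and> (\<forall>v \<in> carrier_vec n. 0 \<le> Re (\<Sum>i<n. \<Sum>j<n. cnj (v $ i) * \<rho> $$ (i, j) * v $ j))
     \<and> mtrace \<rho> = 1"

(* three-qubit basis index of |a b c> is 4a+2b+c; reduced states *)
definition rho_AB :: "complex mat \<Rightarrow> complex mat" where
  "rho_AB \<rho> = mat 4 4 (\<lambda>(i, j). \<Sum>c<2. \<rho> $$ (2*i + c, 2*j + c))"

definition rho_AC :: "complex mat \<Rightarrow> complex mat" where
  "rho_AC \<rho> = mat 4 4 (\<lambda>(i, j). \<Sum>b<2.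
      \<rho> $$ (4*(i div 2) + 2*b + i mod 2, 4*(j div 2) + 2*b + j mod 2))"

definition rho_BC :: "complex mat \<Rightarrow> complex mat" where
  "rho_BC \<rho> = mat 4 4 (\<lambda>(i, j). \<Sum>a<2. \<rho> $$ (4*a + i, 4*a + j))"

definition rho_A :: "complex mat \<Rightarrow> complex mat" where
  "rho_A \<rho> = mat 2 2 (\<lambda>(i, j). \<Sum>b<2. \<Sum>c<2. \<rho> $$ (4*i + 2*b + c, 4*j + 2*b + c))"

(* t_kl = Tr[rho sigma_k (x) sigma_l] (real for Hermitian rho) *)
definition corr :: "complex mat \<Rightarrow> nat \<Rightarrow> nat \<Rightarrow> real" where
  "corr \<rho> k l = Re (mtrace (\<rho> * kron2 (pauli k) (pauli l)))"

definition Scorr :: "complex mat \<Rightarrow> real" where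
  "Scorr \<rho> = (\<Sum>k\<in>{1..3}. \<Sum>l\<in>{1..3}. (corr \<rho> k l)\<^sup>2)"

definition S_max_total :: "complex mat \<Rightarrow> real" where
  "S_max_total \<rho> = Max {Scorr (rho_AB \<rho>) + Scorr (rho_AC \<rho>),
                         Scorr (rho_AB \<rho>) + Scorr (rho_BC \<rho>),
                         Scorr (rho_AC \<rho>) + Scorr (rho_BC \<rho>)}"

definition concurrence :: "complex mat \<Rightarrow> real" where
  "concurrence \<rho> =
     (let Y = kron2 (pauli 2) (pauli 2);
          R = \<rho> * Y * map_mat cnj \<rho> * Y;
          ls = rev (sorted_list_of_multiset (image_mset (\<lambda>z. sqrt (Re z)) (proots (char_poly R))))
      in max 0 (ls ! 0 - ls ! 1 - ls ! 2 - ls ! 3))"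

definition bloch_A :: "complex mat \<Rightarrow> nat \<Rightarrow> real" where
  "bloch_A \<rho> k = Re (mtrace (rho_A \<rho> * pauli k))"

definition unit_vec8 :: "complex vec \<Rightarrow> bool" where
  "unit_vec8 \<psi> \<longleftrightarrow> \<psi> \<in> carrier_vec 8 \<and> (\<Sum>i<8. (cmod (\<psi> $ i))\<^sup>2) = 1"

definition proj :: "complex vec \<Rightarrow> complex mat" where
  "proj \<psi> = mat 8 8 (\<lambda>(i, j). \<psi> $ i * cnj (\<psi> $ j))"

definition tangle_pure :: "complex vec \<Rightarrow> real" where
  "tangle_pure \<psi> = 1 - (\<Sum>k\<in>{1..3}. (bloch_A (proj \<psi>) k)\<^sup>2)
       - (concurrence (rho_AB (proj \<psi>)))\<^sup>2 - (concurrence (rho_AC (proj \<psi>)))\<^sup>2"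

definition pure_decomp :: "complex mat \<Rightarrow> (real \<times> complex vec) list \<Rightarrow> bool" where
  "pure_decomp \<rho> d \<longleftrightarrow>
     (\<forall>x \<in> set d. 0 \<le> fst x \<and> unit_vec8 (snd x))
     \<and> (\<Sum>n<length d. fst (d ! n)) = 1
     \<and> (\<forall>i<8. \<forall>j<8. \<rho> $$ (i, j) = (\<Sum>n<length d. of_real (fst (d ! n)) * proj (snd (d ! n)) $$ (i, j)))"

(* three-tangle of a mixed state: convex roof (infimum = minimum over decompositions) *)
definition tangle :: "complex mat \<Rightarrow> real" where
  "tangle \<rho> = Inf {(\<Sum>n<length d. fst (d ! n) * tangle_pure (snd (d ! n))) | d. pure_decomp \<rho> d}"

end

theory Submission
  imports Defs
begin

text \<open>
  For a pure state write \<open>P\<^sub>X\<close> for the purity of the one-qubit marginal \<open>X\<close>.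
  Since complementary marginals of a pure state have equal purity, a two-qubit
  marginal satisfies \<open>S\<^sub>A\<^sub>B = 1 + 4 P\<^sub>C - 2 P\<^sub>A - 2 P\<^sub>B\<close>. Its concurrence is computed
  from the two branches \<open>u, v\<close> of \<open>\<psi>\<close> along the third qubit: the spin-flipped
  product \<open>\<rho> \<tilde>\<rho>\<close> has rank two, and its two nonzero eigenvalues are the squared
  singular values of the symmetric Gram matrix \<open>G\<close> of the bilinear form
  \<open>x\<^sup>T (\<sigma>\<^sub>y \<otimes> \<sigma>\<^sub>y) y\<close> on \<open>u, v\<close>. This gives
  \<open>C\<^sub>A\<^sub>B\<^sup>2 = 1 + P\<^sub>C - P\<^sub>A - P\<^sub>B - 2 |det G|\<close>, where \<open>|det G|\<close> does not depend on the
  chosen pair, and then \<open>\<tau> = 4 |det G|\<close> and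
  \<open>S\<^sub>A\<^sub>B + S\<^sub>A\<^sub>C + \<tau> = 3 - |a|\<^sup>2 - 2 C\<^sub>B\<^sub>C\<^sup>2 \<le> 3\<close>.
  For a mixed state, every pure decomposition (one exists by a Cholesky-type
  factorisation of \<open>\<rho>\<close>) bounds the convex roof from above, and \<open>S\<close> is convex, being
  a sum of squares of linear functionals; averaging the pure-state bound finishes
  the proof.
\<close>

lemma sum_lessThan_2: "(\<Sum>k<2. g k) = g 0 + g (1::nat)"
  by (simp add: eval_nat_numeral)

lemma sum_lessThan_4: "(\<Sum>k<4. g k) = g 0 + g 1 + g 2 + g (3::nat)"
  by (simp add: eval_nat_numeral)

lemma sum_lessThan_8: "(\<Sum>k<8. g k) = g 0 + g 1 + g 2 + g 3 + g 4 + g 5 + g 6 + g (7::nat)"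
  by (simp add: eval_nat_numeral)

lemma sum_atLeastAtMost_1_3: "(\<Sum>k\<in>{1..3}. g k) = g 1 + g 2 + g (3::nat)"
proof -
  have "{1..3::nat} = {1,2,3}" by auto
  then show ?thesis by (simp add: add.assoc)
qed

lemma less_4_cases: "(i::nat) < 4 \<Longrightarrow> i = 0 \<or> i = 1 \<or> i = 2 \<or> i = 3"
  by auto

lemma sum_delta_mult_left:
  fixes a :: complex and k n :: nat
  assumes "k < n"
  shows "(\<Sum>i<n. (if i = k then a else 0) * g i) = a * g k"
proof -
  have "(\<Sum>i<n. (if i = k then a else 0) * g i) = (\<Sum>i<n. if i = k then a * g k else 0)"
    by (intro sum.cong) auto
  then show ?thesis using assms by simp
qed

lemma sum_delta_mult_right:
  fixes a :: complex and k n :: nat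
  assumes "k < n"
  shows "(\<Sum>i<n. g i * (if i = k then a else 0)) = g k * a"
proof -
  have "(\<Sum>i<n. g i * (if i = k then a else 0)) = (\<Sum>i<n. if i = k then g k * a else 0)"
    by (intro sum.cong) auto
  then show ?thesis using assms by simp
qed

subsection \<open>Gram factorisation of positive semidefinite matrices\<close>

definition quad_form :: "nat \<Rightarrow> (nat \<Rightarrow> nat \<Rightarrow> complex) \<Rightarrow> (nat \<Rightarrow> complex) \<Rightarrow> complex" where
  "quad_form n F v = (\<Sum>i<n. \<Sum>j<n. cnj (v i) * F i j * v j)"

definition hermitian_on :: "nat \<Rightarrow> (nat \<Rightarrow> nat \<Rightarrow> complex) \<Rightarrow> bool" where
  "hermitian_on n F \<longleftrightarrow> (\<forall>i<n. \<forall>j<n. F i j = cnj (F j i))"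

definition psd_on :: "nat \<Rightarrow> (nat \<Rightarrow> nat \<Rightarrow> complex) \<Rightarrow> bool" where
  "psd_on n F \<longleftrightarrow> (\<forall>v. 0 \<le> Re (quad_form n F v))"

lemma quad_form_shift:
  assumes k: "k < n"
  shows "quad_form n F (\<lambda>i. v i - (if i = k then t else 0)) =
    quad_form n F v - cnj t * (\<Sum>j<n. F k j * v j) - t * (\<Sum>i<n. cnj (v i) * F i k) + cnj t * t * F k k"
proof -
  have expand: "cnj (v i - (if i = k then t else 0)) * F i j * (v j - (if j = k then t else 0))
     = cnj (v i) * F i j * v j - (if i = k then cnj t else 0) * (F i j * v j)
       - (cnj (v i) * F i j) * (if j = k then t else 0)
       + (if i = k then cnj t else 0) * (F i j * (if j = k then t else 0))" for i j
    by (simp add: algebra_simps)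
  have row: "(\<Sum>i<n. \<Sum>j<n. (if i = k then cnj t else 0) * (F i j * v j)) = cnj t * (\<Sum>j<n. F k j * v j)"
    unfolding sum_distrib_left[symmetric] by (rule sum_delta_mult_left[OF k])
  have col: "(\<Sum>i<n. \<Sum>j<n. (cnj (v i) * F i j) * (if j = k then t else 0)) = t * (\<Sum>i<n. cnj (v i) * F i k)"
    unfolding sum_delta_mult_right[OF k] by (simp add: sum_distrib_left mult.commute)
  have corner: "(\<Sum>i<n. \<Sum>j<n. (if i = k then cnj t else 0) * (F i j * (if j = k then t else 0))) = cnj t * t * F k k"
    unfolding sum_distrib_left[symmetric] sum_delta_mult_left[OF k] sum_delta_mult_right[OF k] by simp
  show ?thesis
    unfolding quad_form_def expand sum.distrib sum_subtractf row col corner ..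
qed

lemma quad_form_unit:
  assumes j: "j < n"
  shows "quad_form n F (\<lambda>i. if i = j then 1 else 0) = F j j"
proof -
  have "quad_form n F (\<lambda>i. if i = j then 1 else 0)
      = (\<Sum>i<n. (if i = j then 1 else 0) * (\<Sum>l<n. F i l * (if l = j then 1 else 0)))"
    unfolding quad_form_def sum_distrib_left by (intro sum.cong refl) (simp add: algebra_simps)
  also have "\<dots> = F j j" unfolding sum_delta_mult_right[OF j] sum_delta_mult_left[OF j] by simp
  finally show ?thesis .
qed

lemma psd_on_diag_nonneg:
  assumes "psd_on n F" "j < n"
  shows "0 \<le> Re (F j j)"
  using assms quad_form_unit[of j n F] unfolding psd_on_def by metis

lemma hermitian_on_diag_real:
  assumes "hermitian_on n F" "j < n"
  shows "F j j = complex_of_real (Re (F j j))"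
proof -
  have "F j j = cnj (F j j)" using assms unfolding hermitian_on_def by blast
  then show ?thesis by (simp add: complex_eq_iff)
qed

text \<open>If \<open>F j k \<noteq> 0\<close>, moving the test vector \<open>e\<^sub>j\<close> along \<open>e\<^sub>k\<close> makes the quadratic form negative.\<close>

lemma psd_on_zero_diag_column:
  assumes h: "hermitian_on n F" and p: "psd_on n F" and k: "k < n" and j: "j < n" and z: "F k k = 0"
  shows "F j k = 0"
proof (rule ccontr)
  assume nz: "F j k \<noteq> 0"
  define c where "c = (cmod (F j k))^2"
  have c0: "c > 0" using nz unfolding c_def by simp
  define s where "s = (Re (F j j) + 1) / (2 * c)"
  define t where "t = complex_of_real s * cnj (F j k)"
  define e where "e = (\<lambda>i. if i = j then (1::complex) else 0)"
  have fkj: "F k j = cnj (F j k)" using h k j unfolding hermitian_on_def by blast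
  have row: "(\<Sum>l<n. F k l * e l) = F k j" unfolding e_def sum_delta_mult_right[OF j] by simp
  have cnj_e: "cnj (e i) = e i" for i unfolding e_def by simp
  have col: "(\<Sum>i<n. cnj (e i) * F i k) = F j k"
    unfolding cnj_e unfolding e_def sum_delta_mult_left[OF j] by simp
  have "quad_form n F (\<lambda>i. e i - (if i = k then t else 0)) = F j j - cnj t * F k j - t * F j k"
    unfolding quad_form_shift[OF k] row col z using quad_form_unit[OF j, of F] unfolding e_def by simp
  also have "\<dots> = F j j - complex_of_real (2 * s * c)"
    unfolding t_def fkj c_def of_real_mult complex_norm_square[symmetric]
    by (simp add: algebra_simps complex_norm_square flip: of_real_power)
  finally have "Re (quad_form n F (\<lambda>i. e i - (if i = k then t else 0))) = Re (F j j) - 2 * s * c"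
    by simp
  also have "\<dots> = -1" unfolding s_def using c0 by (simp add: field_simps)
  finally have "Re (quad_form n F (\<lambda>i. e i - (if i = k then t else 0))) = -1" .
  moreover have "0 \<le> Re (quad_form n F (\<lambda>i. e i - (if i = k then t else 0)))"
    using p unfolding psd_on_def by blast
  ultimately show False by simp
qed

lemma psd_on_schur_complement:
  assumes h: "hermitian_on n F" and p: "psd_on n F" and k: "k < n" and pos: "Re (F k k) > 0"
  defines "w \<equiv> \<lambda>i. F i k / complex_of_real (sqrt (Re (F k k)))"
  defines "G \<equiv> \<lambda>i j. F i j - w i * cnj (w j)"
  shows "hermitian_on n G" "psd_on n G" "\<And>j. j < n \<Longrightarrow> G k j = 0" "\<And>i. i < n \<Longrightarrow> G i k = 0"
proof -
  define r where "r = Re (F k k)"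
  have Fkk: "F k k = complex_of_real r" unfolding r_def by (rule hermitian_on_diag_real[OF h k])
  have r0: "r > 0" using pos unfolding r_def .
  have ww: "w i * cnj (w j) = F i k * cnj (F j k) / complex_of_real r" for i j
  proof -
    have "complex_of_real (sqrt r) * complex_of_real (sqrt r) = complex_of_real r"
      using r0 by (simp flip: of_real_mult)
    then show ?thesis unfolding w_def r_def[symmetric] by (simp add: field_simps)
  qed
  have hF: "F i j = cnj (F j i)" if "i < n" "j < n" for i j using h that unfolding hermitian_on_def by blast
  show "hermitian_on n G" unfolding hermitian_on_def G_def
  proof (intro allI impI)
    fix i j assume "i < n" "j < n"
    then show "F i j - w i * cnj (w j) = cnj (F j i - w j * cnj (w i))" using hF[of i j] by simp
  qed
  show "G k j = 0" if "j < n" for j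
    unfolding G_def ww using hF[OF k that] Fkk r0 by (simp add: field_simps)
  show "G i k = 0" if "i < n" for i
    unfolding G_def ww using hF[OF that k] Fkk r0 by (simp add: field_simps)
  show "psd_on n G" unfolding psd_on_def
  proof
    fix v :: "nat \<Rightarrow> complex"
    define \<alpha> where "\<alpha> = (\<Sum>j<n. F k j * v j)"
    have col: "(\<Sum>i<n. cnj (v i) * F i k) = cnj \<alpha>"
      unfolding \<alpha>_def cnj_sum by (intro sum.cong refl) (simp add: hF[OF _ k])
    have row: "(\<Sum>j<n. cnj (F j k) * v j) = \<alpha>"
      unfolding \<alpha>_def by (intro sum.cong refl) (simp add: hF[OF k])
    have "quad_form n G v = quad_form n F v - (\<Sum>i<n. \<Sum>j<n. cnj (v i) * (w i * cnj (w j)) * v j)"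
      unfolding quad_form_def G_def by (simp add: algebra_simps sum_subtractf)
    also have "(\<Sum>i<n. \<Sum>j<n. cnj (v i) * (w i * cnj (w j)) * v j)
        = (\<Sum>i<n. cnj (v i) * F i k) * (\<Sum>j<n. cnj (F j k) * v j) / complex_of_real r"
      unfolding ww sum_product by (simp add: sum_divide_distrib algebra_simps)
    finally have "quad_form n G v = quad_form n F v - cnj \<alpha> * \<alpha> / complex_of_real r"
      unfolding col row .
    also have "\<dots> = quad_form n F (\<lambda>i. v i - (if i = k then \<alpha> / F k k else 0))"
      unfolding quad_form_shift[OF k] col \<alpha>_def[symmetric] Fkk using r0 by (simp add: field_simps)
    finally show "0 \<le> Re (quad_form n G v)" using p unfolding psd_on_def by simp
  qed
qed

text \<open>Induction on the number \<open>m\<close> of trailing rows and columns not yet known to vanish;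
  each step splits off a rank-one term by the Schur complement at index \<open>n - Suc m\<close>.\<close>

lemma psd_on_gram_factor_induct:
  assumes "m \<le> n" "hermitian_on n F" "psd_on n F"
    and "\<forall>i<n. \<forall>j<n. (i < n - m \<or> j < n - m) \<longrightarrow> F i j = 0"
  shows "\<exists>(r::nat) W. \<forall>i<n. \<forall>j<n. F i j = (\<Sum>l<r. W l i * cnj (W l j))"
  using assms
proof (induction m arbitrary: F)
  case 0
  then have F0: "F i j = 0" if "i < n" "j < n" for i j using that by simp
  show ?case by (intro exI[of _ "0::nat"] exI[of _ "\<lambda>_ _. 0"]) (simp add: F0)
next
  case (Suc m)
  define k where "k = n - Suc m"
  have k: "k < n" and k_Suc: "n - m = Suc k" using Suc.prems(1) unfolding k_def by auto
  have z: "F i j = 0" if "i < n" "j < n" "i < k \<or> j < k" for i j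
    using Suc.prems(4) that unfolding k_def by blast
  have split: "i < k \<or> i = k \<or> j < k \<or> j = k" if "i < n - m \<or> j < n - m" for i j
    using that unfolding k_Suc by auto
  show ?case
  proof (cases "Re (F k k) > 0")
    case True
    define w where "w = (\<lambda>i. F i k / complex_of_real (sqrt (Re (F k k))))"
    define G where "G = (\<lambda>i j. F i j - w i * cnj (w j))"
    have S: "hermitian_on n G" "psd_on n G" "\<And>j. j < n \<Longrightarrow> G k j = 0" "\<And>i. i < n \<Longrightarrow> G i k = 0"
      using psd_on_schur_complement[OF Suc.prems(2,3) k True] unfolding G_def w_def by blast+
    have w0: "w i = 0" if "i < k" for i using z[of i k] that k unfolding w_def by simp
    have "\<forall>i<n. \<forall>j<n. (i < n - m \<or> j < n - m) \<longrightarrow> G i j = 0"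
    proof (intro allI impI)
      fix i j assume ij: "i < n" "j < n" and "i < n - m \<or> j < n - m"
      then consider "i < k" | "i = k" | "j < k" | "j = k" using split by blast
      then show "G i j = 0"
        by cases (use z[OF ij] ij w0 S(3,4) in \<open>simp_all add: G_def\<close>)
    qed
    then have "\<exists>(r::nat) W. \<forall>i<n. \<forall>j<n. G i j = (\<Sum>l<r. W l i * cnj (W l j))"
      by (rule Suc.IH[OF Suc_leD[OF Suc.prems(1)] S(1,2)])
    then obtain r :: nat and W where W: "\<forall>i<n. \<forall>j<n. G i j = (\<Sum>l<r. W l i * cnj (W l j))"
      by blast
    have F_eq: "\<forall>i<n. \<forall>j<n. F i j = (\<Sum>l<Suc r. (W(r := w)) l i * cnj ((W(r := w)) l j))"
      using W unfolding G_def by (simp add: diff_eq_eq)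
    show ?thesis by (intro exI[of _ "Suc r"] exI[of _ "W(r := w)"]) (rule F_eq)
  next
    case False
    have "Re (F k k) = 0" using False psd_on_diag_nonneg[OF Suc.prems(3) k] by linarith
    then have "F k k = 0" using hermitian_on_diag_real[OF Suc.prems(2) k] by simp
    then have col: "F j k = 0" if "j < n" for j
      by (rule psd_on_zero_diag_column[OF Suc.prems(2,3) k that])
    have row: "F k j = 0" if "j < n" for j
    proof -
      have "F k j = cnj (F j k)" using Suc.prems(2) k that unfolding hermitian_on_def by blast
      then show ?thesis using col[OF that] by simp
    qed
    have "\<forall>i<n. \<forall>j<n. (i < n - m \<or> j < n - m) \<longrightarrow> F i j = 0"
    proof (intro allI impI)
      fix i j assume ij: "i < n" "j < n" and "i < n - m \<or> j < n - m"
      then consider "i < k" | "i = k" | "j < k" | "j = k" using split by blast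
      then show "F i j = 0" by cases (use z[OF ij] ij row col in auto)
    qed
    then show ?thesis by (rule Suc.IH[OF Suc_leD[OF Suc.prems(1)] Suc.prems(2,3)])
  qed
qed

lemma psd_on_gram_factor:
  assumes "hermitian_on n F" "psd_on n F"
  shows "\<exists>(r::nat) W. \<forall>i<n. \<forall>j<n. F i j = (\<Sum>l<r. W l i * cnj (W l j))"
  by (rule psd_on_gram_factor_induct[of n n F]) (use assms in auto)

lemma rank_one_eq_scaled_proj:
  fixes w :: "nat \<Rightarrow> complex"
  obtains \<psi> where "unit_vec8 \<psi>"
    "\<And>i j. i < 8 \<Longrightarrow> j < 8 \<Longrightarrow>
       complex_of_real (\<Sum>l<8. (cmod (w l))\<^sup>2) * proj \<psi> $$ (i, j) = w i * cnj (w j)"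
proof (cases "(\<Sum>l<8. (cmod (w l))\<^sup>2) = 0")
  case True
  then have "w i = 0" if "i < 8" for i
    using that sum_nonneg_eq_0_iff[of "{..<8::nat}" "\<lambda>l. (cmod (w l))\<^sup>2"] by simp
  moreover have "unit_vec8 (vec 8 (\<lambda>i. if i = 0 then 1 else 0))"
    unfolding unit_vec8_def by (simp add: sum_lessThan_8)
  ultimately show thesis using that True by simp
next
  case False
  define N where "N = (\<Sum>l<8. (cmod (w l))\<^sup>2)"
  have pos: "N > 0" using False unfolding N_def by (simp add: sum_nonneg order_le_neq_trans)
  define \<psi> where "\<psi> = vec 8 (\<lambda>i. w i / complex_of_real (sqrt N))"
  have "(\<Sum>i<8. (cmod (\<psi> $ i))\<^sup>2) = (\<Sum>i<8. (cmod (w i))\<^sup>2) / N"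
    unfolding \<psi>_def using pos by (simp add: norm_divide power_divide sum_divide_distrib)
  then have "unit_vec8 \<psi>" using pos unfolding unit_vec8_def \<psi>_def N_def by simp
  moreover have "complex_of_real N * proj \<psi> $$ (i, j) = w i * cnj (w j)" if "i < 8" "j < 8" for i j
  proof -
    have "complex_of_real (sqrt N) * complex_of_real (sqrt N) = complex_of_real N"
      using pos by (simp flip: of_real_mult)
    then show ?thesis using that pos unfolding \<psi>_def proj_def by (simp add: field_simps)
  qed
  ultimately show thesis using that unfolding N_def by blast
qed

lemma density_op_hermitian_psd:
  assumes dens: "density_op n \<rho>"
  shows "hermitian_on n (\<lambda>i j. \<rho> $$ (i, j))" "psd_on n (\<lambda>i j. \<rho> $$ (i, j))"
proof -
  show "hermitian_on n (\<lambda>i j. \<rho> $$ (i, j))"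
    using dens unfolding density_op_def hermitian_on_def by blast
  show "psd_on n (\<lambda>i j. \<rho> $$ (i, j))" unfolding psd_on_def
  proof
    fix v :: "nat \<Rightarrow> complex"
    have "vec n v \<in> carrier_vec n" by simp
    then have "0 \<le> Re (\<Sum>i<n. \<Sum>j<n. cnj (vec n v $ i) * \<rho> $$ (i, j) * vec n v $ j)"
      using dens unfolding density_op_def by blast
    also have "(\<Sum>i<n. \<Sum>j<n. cnj (vec n v $ i) * \<rho> $$ (i, j) * vec n v $ j)
        = quad_form n (\<lambda>i j. \<rho> $$ (i, j)) v"
      unfolding quad_form_def by (intro sum.cong refl) simp
    finally show "0 \<le> Re (quad_form n (\<lambda>i j. \<rho> $$ (i, j)) v)" .
  qed
qed

lemma density_op_pure_decomp_exists:
  assumes dens: "density_op 8 \<rho>"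
  shows "\<exists>d. pure_decomp \<rho> d"
proof -
  have car: "\<rho> \<in> carrier_mat 8 8" and tr: "mtrace \<rho> = 1"
    using dens unfolding density_op_def by blast+
  have "\<exists>(r::nat) W. \<forall>i<8. \<forall>j<8. \<rho> $$ (i, j) = (\<Sum>l<r. W l i * cnj (W l j))"
    by (rule psd_on_gram_factor[OF density_op_hermitian_psd[OF dens]])
  then obtain r :: nat and W where W: "\<forall>i<8. \<forall>j<8. \<rho> $$ (i, j) = (\<Sum>l<r. W l i * cnj (W l j))"
    by blast
  define p where "p = (\<lambda>l. \<Sum>i<8. (cmod (W l i))\<^sup>2)"
  have "\<exists>\<psi>. unit_vec8 \<psi> \<and>
      (\<forall>i<8. \<forall>j<8. complex_of_real (p l) * proj \<psi> $$ (i, j) = W l i * cnj (W l j))" for l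
  proof -
    obtain \<psi> where "unit_vec8 \<psi>"
      "\<And>i j. i < 8 \<Longrightarrow> j < 8 \<Longrightarrow> complex_of_real (p l) * proj \<psi> $$ (i, j) = W l i * cnj (W l j)"
      unfolding p_def by (rule rank_one_eq_scaled_proj[of "W l"]) blast
    then show ?thesis by blast
  qed
  then have "\<forall>l. \<exists>\<psi>. unit_vec8 \<psi> \<and>
      (\<forall>i<8. \<forall>j<8. complex_of_real (p l) * proj \<psi> $$ (i, j) = W l i * cnj (W l j))" ..
  from choice[OF this] obtain \<Psi> where \<Psi>: "\<forall>l. unit_vec8 (\<Psi> l) \<and>
      (\<forall>i<8. \<forall>j<8. complex_of_real (p l) * proj (\<Psi> l) $$ (i, j) = W l i * cnj (W l j))"
    by blast
  define d where "d = map (\<lambda>l. (p l, \<Psi> l)) [0..<r]"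
  have len: "length d = r" and d_nth: "\<And>l. l < r \<Longrightarrow> d ! l = (p l, \<Psi> l)"
    unfolding d_def by simp_all
  have "(\<Sum>l<r. p l) = (\<Sum>i<8. \<Sum>l<r. (cmod (W l i))\<^sup>2)" unfolding p_def by (rule sum.swap)
  also have "\<dots> = (\<Sum>i<8. Re (\<rho> $$ (i, i)))"
  proof (intro sum.cong refl)
    fix i :: nat assume "i \<in> {..<8}"
    then have "\<rho> $$ (i, i) = complex_of_real (\<Sum>l<r. (cmod (W l i))\<^sup>2)"
      unfolding of_real_sum complex_norm_square using W by simp
    then show "(\<Sum>l<r. (cmod (W l i))\<^sup>2) = Re (\<rho> $$ (i, i))" by simp
  qed
  also have "\<dots> = Re (mtrace \<rho>)" using car unfolding mtrace_def by (simp add: Re_sum)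
  also have "\<dots> = 1" using tr by simp
  finally have weights: "(\<Sum>l<r. p l) = 1" .
  have "pure_decomp \<rho> d" unfolding pure_decomp_def
  proof (intro conjI ballI allI impI)
    fix x assume "x \<in> set d"
    then obtain l where "x = (p l, \<Psi> l)" unfolding d_def by auto
    then show "0 \<le> fst x" "unit_vec8 (snd x)" using \<Psi> by (simp_all add: p_def sum_nonneg)
  next
    have "(\<Sum>n<length d. fst (d ! n)) = (\<Sum>l<r. p l)"
      unfolding len by (intro sum.cong refl) (simp add: d_nth)
    then show "(\<Sum>n<length d. fst (d ! n)) = 1" using weights by simp
  next
    fix i j :: nat assume ij: "i < 8" "j < 8"
    have "\<rho> $$ (i, j) = (\<Sum>l<r. W l i * cnj (W l j))" using W ij by simp
    also have "\<dots> = (\<Sum>n<length d. complex_of_real (fst (d ! n)) * proj (snd (d ! n)) $$ (i, j))"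
      unfolding len using \<Psi> ij by (intro sum.cong refl) (simp add: d_nth)
    finally show "\<rho> $$ (i, j) = (\<Sum>n<length d. complex_of_real (fst (d ! n)) * proj (snd (d ! n)) $$ (i, j))" .
  qed
  then show ?thesis ..
qed

subsection \<open>Pauli correlations and purities\<close>

lemma pauli_carrier [simp]: "pauli k \<in> carrier_mat 2 2"
  by (simp add: pauli_def mat_of_rows_list_def numeral_2_eq_2)

lemma pauli_0: "pauli 0 = 1\<^sub>m 2"
  by (simp add: pauli_def)

lemma pauli_entries:
  "pauli 0 $$ (0,0) = 1" "pauli 0 $$ (0,1) = 0" "pauli 0 $$ (1,0) = 0" "pauli 0 $$ (1,1) = 1"
  "pauli 1 $$ (0,0) = 0" "pauli 1 $$ (0,1) = 1" "pauli 1 $$ (1,0) = 1" "pauli 1 $$ (1,1) = 0"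
  "pauli 2 $$ (0,0) = 0" "pauli 2 $$ (0,1) = -\<i>" "pauli 2 $$ (1,0) = \<i>" "pauli 2 $$ (1,1) = 0"
  "pauli 3 $$ (0,0) = 1" "pauli 3 $$ (0,1) = 0" "pauli 3 $$ (1,0) = 0" "pauli 3 $$ (1,1) = -1"
  by (simp_all add: pauli_def mat_of_rows_list_def)

lemma mtrace_mult_2:
  assumes "r \<in> carrier_mat 2 2" "A \<in> carrier_mat 2 2"
  shows "mtrace (r * A) = r $$ (0,0) * A $$ (0,0) + r $$ (0,1) * A $$ (1,0) + r $$ (1,0) * A $$ (0,1) + r $$ (1,1) * A $$ (1,1)"
  using assms by (simp add: mtrace_def scalar_prod_def lessThan_atLeast0[symmetric] sum_lessThan_2 algebra_simps del: One_nat_def)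

lemma mtrace_mult_kron2:
  assumes "r \<in> carrier_mat 4 4"
  shows "mtrace (r * kron2 A B) =
      r $$ (0,0) * (A $$ (0,0) * B $$ (0,0)) + r $$ (0,1) * (A $$ (0,0) * B $$ (1,0))
    + r $$ (0,2) * (A $$ (1,0) * B $$ (0,0)) + r $$ (0,3) * (A $$ (1,0) * B $$ (1,0))
    + r $$ (1,0) * (A $$ (0,0) * B $$ (0,1)) + r $$ (1,1) * (A $$ (0,0) * B $$ (1,1))
    + r $$ (1,2) * (A $$ (1,0) * B $$ (0,1)) + r $$ (1,3) * (A $$ (1,0) * B $$ (1,1))
    + r $$ (2,0) * (A $$ (0,1) * B $$ (0,0)) + r $$ (2,1) * (A $$ (0,1) * B $$ (1,0))
    + r $$ (2,2) * (A $$ (1,1) * B $$ (0,0)) + r $$ (2,3) * (A $$ (1,1) * B $$ (1,0))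
    + r $$ (3,0) * (A $$ (0,1) * B $$ (0,1)) + r $$ (3,1) * (A $$ (0,1) * B $$ (1,1))
    + r $$ (3,2) * (A $$ (1,1) * B $$ (0,1)) + r $$ (3,3) * (A $$ (1,1) * B $$ (1,1))"
  using assms
  by (simp add: mtrace_def kron2_def scalar_prod_def lessThan_atLeast0[symmetric] sum_lessThan_4 algebra_simps)

definition frob_sq :: "nat \<Rightarrow> complex mat \<Rightarrow> real" where
  "frob_sq n r = (\<Sum>i<n. \<Sum>j<n. (cmod (r $$ (i, j)))\<^sup>2)"

lemma sum_sq_pauli_corr:
  assumes "r \<in> carrier_mat 4 4" and h: "hermitian_on 4 (\<lambda>i j. r $$ (i, j))"
  shows "(\<Sum>k<4. \<Sum>l<4. (corr r k l)\<^sup>2) = 4 * frob_sq 4 r"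
proof -
  have hr: "r $$ (i, j) = cnj (r $$ (j, i))" if "i < 4" "j < 4" for i j
    using h that unfolding hermitian_on_def by blast
  have off: "r $$ (1,0) = cnj (r $$ (0,1))" "r $$ (2,0) = cnj (r $$ (0,2))" "r $$ (3,0) = cnj (r $$ (0,3))"
     "r $$ (2,1) = cnj (r $$ (1,2))" "r $$ (3,1) = cnj (r $$ (1,3))" "r $$ (3,2) = cnj (r $$ (2,3))"
    using hr[of 1 0] hr[of 2 0] hr[of 3 0] hr[of 2 1] hr[of 3 1] hr[of 3 2] by simp_all
  have diag: "Im (r $$ (0,0)) = 0" "Im (r $$ (1,1)) = 0" "Im (r $$ (2,2)) = 0" "Im (r $$ (3,3)) = 0"
    using hr[of 0 0] hr[of 1 1] hr[of 2 2] hr[of 3 3] by (simp_all add: complex_eq_iff)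
  show ?thesis
    unfolding corr_def frob_sq_def mtrace_mult_kron2[OF assms(1)]
    apply (simp add: sum_lessThan_4 pauli_entries pauli_entries[unfolded One_nat_def] off diag
        off[unfolded One_nat_def] diag[unfolded One_nat_def] cmod_power2 algebra_simps)
    by (simp add: power2_eq_square algebra_simps)
qed

lemma sum_sq_pauli_trace:
  assumes "r \<in> carrier_mat 2 2" and h: "hermitian_on 2 (\<lambda>i j. r $$ (i, j))"
  shows "(\<Sum>k<4. (Re (mtrace (r * pauli k)))\<^sup>2) = 2 * frob_sq 2 r"
proof -
  have hr: "r $$ (i, j) = cnj (r $$ (j, i))" if "i < 2" "j < 2" for i j
    using h that unfolding hermitian_on_def by blast
  have off: "r $$ (1,0) = cnj (r $$ (0,1))" using hr[of 1 0] by simp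
  have diag: "Im (r $$ (0,0)) = 0" "Im (r $$ (1,1)) = 0"
    using hr[of 0 0] hr[of 1 1] by (simp_all add: complex_eq_iff)
  show ?thesis
    unfolding frob_sq_def
    apply (simp add: mtrace_mult_2[OF assms(1)] sum_lessThan_4 sum_lessThan_2 pauli_entries off diag
        cmod_power2 algebra_simps del: One_nat_def)
    by (simp add: power2_eq_square algebra_simps)
qed

lemma Scorr_eq_frob_sq:
  assumes "r \<in> carrier_mat 4 4" "hermitian_on 4 (\<lambda>i j. r $$ (i, j))"
  shows "Scorr r = 4 * frob_sq 4 r - (corr r 0 0)\<^sup>2
    - (\<Sum>k\<in>{1..3}. (corr r k 0)\<^sup>2) - (\<Sum>l\<in>{1..3}. (corr r 0 l)\<^sup>2)"
  using sum_sq_pauli_corr[OF assms]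
  unfolding Scorr_def sum_atLeastAtMost_1_3 sum_lessThan_4 by simp

lemma Scorr_eq_purities:
  assumes r: "r \<in> carrier_mat 4 4" "hermitian_on 4 (\<lambda>i j. r $$ (i, j))"
    and a: "a \<in> carrier_mat 2 2" "hermitian_on 2 (\<lambda>i j. a $$ (i, j))" "mtrace a = 1"
    and b: "b \<in> carrier_mat 2 2" "hermitian_on 2 (\<lambda>i j. b $$ (i, j))"
    and marginal_a: "\<And>M. M \<in> carrier_mat 2 2 \<Longrightarrow> mtrace (r * kron2 M (pauli 0)) = mtrace (a * M)"
    and marginal_b: "\<And>M. M \<in> carrier_mat 2 2 \<Longrightarrow> mtrace (r * kron2 (pauli 0) M) = mtrace (b * M)"
  shows "Scorr r = 1 + 4 * frob_sq 4 r - 2 * frob_sq 2 a - 2 * frob_sq 2 b"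
proof -
  have corr_a: "corr r k 0 = Re (mtrace (a * pauli k))" for k
    unfolding corr_def marginal_a[OF pauli_carrier] ..
  have corr_b: "corr r 0 l = Re (mtrace (b * pauli l))" for l
    unfolding corr_def marginal_b[OF pauli_carrier] ..
  have a0: "Re (mtrace (a * pauli 0)) = 1" using a(1,3) by (simp add: pauli_0)
  moreover have b0: "Re (mtrace (b * pauli 0)) = 1"
    using a0 unfolding corr_a[symmetric] corr_b[symmetric] .
  ultimately have "(\<Sum>k\<in>{1..3}. (corr r k 0)\<^sup>2) = 2 * frob_sq 2 a - 1"
    "(\<Sum>l\<in>{1..3}. (corr r 0 l)\<^sup>2) = 2 * frob_sq 2 b - 1" "corr r 0 0 = 1"
    using sum_sq_pauli_trace[OF a(1,2)] sum_sq_pauli_trace[OF b]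
    unfolding corr_a corr_b sum_lessThan_4 sum_atLeastAtMost_1_3 by simp_all
  then show ?thesis unfolding Scorr_eq_frob_sq[OF r] by simp
qed

subsection \<open>Concurrence of rank-two two-qubit states\<close>

lemma det_mat_1: "det (mat (Suc 0) (Suc 0) f) = f (0,0)"
  unfolding det_def by (auto simp: sign_def)

lemma det_mat_2:
  "det (mat (Suc (Suc 0)) (Suc (Suc 0)) f) = f (0,0) * f (Suc 0,Suc 0) - f (0,Suc 0) * f (Suc 0,0)"
proof -
  have "mat (Suc (Suc 0)) (Suc (Suc 0)) f \<in> carrier_mat (Suc (Suc 0)) (Suc (Suc 0))" by simp
  from laplace_expansion_column[OF this, of 0] show ?thesis
    by (simp add: cofactor_def det_mat_1 mat_delete_def)
qed

lemma det_mat_3: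
  "det (mat (Suc (Suc (Suc 0))) (Suc (Suc (Suc 0))) f) =
       f (0,0) * (f (1,1) * f (2,2) - f (1,2) * f (2,1))
     - f (1,0) * (f (0,1) * f (2,2) - f (0,2) * f (2,1))
     + f (2,0) * (f (0,1) * f (1,2) - f (0,2) * f (1,1))"
proof -
  have "mat (Suc (Suc (Suc 0))) (Suc (Suc (Suc 0))) f \<in> carrier_mat (Suc (Suc (Suc 0))) (Suc (Suc (Suc 0)))"
    by simp
  from laplace_expansion_column[OF this, of 0] show ?thesis
    by (simp add: cofactor_def det_mat_2 mat_delete_def eval_nat_numeral insert_index_def algebra_simps)
qed

lemma det_mat_4:
  "det (mat 4 4 f) =
       f (0,0) * (f (1,1) * (f (2,2) * f (3,3) - f (2,3) * f (3,2)) - f (2,1) * (f (1,2) * f (3,3) - f (1,3) * f (3,2))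
         + f (3,1) * (f (1,2) * f (2,3) - f (1,3) * f (2,2)))
     - f (1,0) * (f (0,1) * (f (2,2) * f (3,3) - f (2,3) * f (3,2)) - f (2,1) * (f (0,2) * f (3,3) - f (0,3) * f (3,2))
         + f (3,1) * (f (0,2) * f (2,3) - f (0,3) * f (2,2)))
     + f (2,0) * (f (0,1) * (f (1,2) * f (3,3) - f (1,3) * f (3,2)) - f (1,1) * (f (0,2) * f (3,3) - f (0,3) * f (3,2))
         + f (3,1) * (f (0,2) * f (1,3) - f (0,3) * f (1,2)))
     - f (3,0) * (f (0,1) * (f (1,2) * f (2,3) - f (1,3) * f (2,2)) - f (1,1) * (f (0,2) * f (2,3) - f (0,3) * f (2,2))
         + f (2,1) * (f (0,2) * f (1,3) - f (0,3) * f (1,2)))"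
proof -
  have "mat 4 4 f \<in> carrier_mat 4 4" by simp
  from laplace_expansion_column[OF this, of 0] show ?thesis
    by (simp add: cofactor_def det_mat_3 mat_delete_def eval_nat_numeral insert_index_def algebra_simps)
qed

lemma char_poly_rank_two:
  fixes u v a b :: "nat \<Rightarrow> complex"
  defines "t\<^sub>u\<^sub>u \<equiv> \<Sum>i<4. a i * u i" and "t\<^sub>u\<^sub>v \<equiv> \<Sum>i<4. a i * v i"
    and "t\<^sub>v\<^sub>u \<equiv> \<Sum>i<4. b i * u i" and "t\<^sub>v\<^sub>v \<equiv> \<Sum>i<4. b i * v i"
  shows "char_poly (mat 4 4 (\<lambda>(i, j). u i * a j + v i * b j)) =
    [:0, 0, t\<^sub>u\<^sub>u * t\<^sub>v\<^sub>v - t\<^sub>u\<^sub>v * t\<^sub>v\<^sub>u, - (t\<^sub>u\<^sub>u + t\<^sub>v\<^sub>v), 1:]"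
  (is "char_poly ?R = ?q")
proof -
  have car: "?R \<in> carrier_mat 4 4" by simp
  show ?thesis unfolding poly_eq_poly_eq_iff[symmetric]
  proof
    fix x
    have "- char_matrix ?R x = mat 4 4 (\<lambda>(i, j). (if i = j then x else 0) - (u i * a j + v i * b j))"
      by (rule eq_matI) (auto simp: char_matrix_def)
    moreover have "det (mat 4 4 (\<lambda>(i, j). (if i = j then x else 0) - (u i * a j + v i * b j)))
        = x^4 - (t\<^sub>u\<^sub>u + t\<^sub>v\<^sub>v) * x^3 + (t\<^sub>u\<^sub>u * t\<^sub>v\<^sub>v - t\<^sub>u\<^sub>v * t\<^sub>v\<^sub>u) * x^2"
      unfolding det_mat_4 assms by (simp add: eval_nat_numeral) (simp add: algebra_simps)
    ultimately show "poly (char_poly ?R) x = poly ?q x"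
      unfolding char_poly_matrix[OF car]
      by (simp add: algebra_simps power2_eq_square power3_eq_cube power4_eq_xxxx)
  qed
qed

lemma quartic_two_zero_roots_factor:
  fixes p s :: real
  assumes "0 \<le> p" "4 * p \<le> s\<^sup>2" "0 \<le> s"
  defines "e\<^sub>1 \<equiv> (s + sqrt (s\<^sup>2 - 4 * p)) / 2" and "e\<^sub>2 \<equiv> (s - sqrt (s\<^sup>2 - 4 * p)) / 2"
  shows "[:0, 0, complex_of_real p, - complex_of_real s, 1:] =
      [:0, 1:] * [:0, 1:] * [:- complex_of_real e\<^sub>1, 1:] * [:- complex_of_real e\<^sub>2, 1:]"
    and "e\<^sub>1 * e\<^sub>2 = p" "e\<^sub>1 + e\<^sub>2 = s" "0 \<le> e\<^sub>2" "e\<^sub>2 \<le> e\<^sub>1"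
proof -
  define d where "d = sqrt (s\<^sup>2 - 4 * p)"
  have d_sq: "d\<^sup>2 = s\<^sup>2 - 4 * p" using assms(2) unfolding d_def by simp
  have "sqrt (s\<^sup>2 - 4 * p) \<le> sqrt (s\<^sup>2)" by (rule real_sqrt_le_mono) (use assms in simp)
  then have d_le: "d \<le> s" using assms(3) unfolding d_def by simp
  have d0: "0 \<le> d" unfolding d_def using assms(2) by simp
  have roots: "e\<^sub>1 = (s + d) / 2" "e\<^sub>2 = (s - d) / 2" unfolding assms(4,5) d_def by auto
  have "(s + d) * (s - d) = s\<^sup>2 - d\<^sup>2" by (simp add: algebra_simps power2_eq_square)
  then show prod: "e\<^sub>1 * e\<^sub>2 = p" unfolding roots using d_sq by simp
  show sum: "e\<^sub>1 + e\<^sub>2 = s" unfolding roots by argo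
  show "0 \<le> e\<^sub>2" unfolding roots using d_le by argo
  show "e\<^sub>2 \<le> e\<^sub>1" unfolding roots using d0 by argo
  have "complex_of_real e\<^sub>1 * complex_of_real e\<^sub>2 = complex_of_real p"
    "complex_of_real e\<^sub>1 + complex_of_real e\<^sub>2 = complex_of_real s"
    using prod sum by (simp_all flip: of_real_mult of_real_add)
  then show "[:0, 0, complex_of_real p, - complex_of_real s, 1:] =
      [:0, 1:] * [:0, 1:] * [:- complex_of_real e\<^sub>1, 1:] * [:- complex_of_real e\<^sub>2, 1:]"
    unfolding poly_eq_poly_eq_iff[symmetric] by (auto simp: algebra_simps)
qed

definition sigma_yy :: "complex mat" where
  "sigma_yy = kron2 (pauli 2) (pauli 2)"

lemma concurrence_of_char_poly:
  fixes p s :: real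
  assumes "char_poly (\<rho> * sigma_yy * map_mat cnj \<rho> * sigma_yy) = [:0, 0, complex_of_real p, - complex_of_real s, 1:]"
    and "0 \<le> p" "4 * p \<le> s\<^sup>2" "0 \<le> s"
  shows "(concurrence \<rho>)\<^sup>2 = s - 2 * sqrt p"
proof -
  define e\<^sub>1 where "e\<^sub>1 = (s + sqrt (s\<^sup>2 - 4 * p)) / 2"
  define e\<^sub>2 where "e\<^sub>2 = (s - sqrt (s\<^sup>2 - 4 * p)) / 2"
  note F = quartic_two_zero_roots_factor[OF assms(2-4), folded e\<^sub>1_def e\<^sub>2_def]
  have "proots (char_poly (\<rho> * sigma_yy * map_mat cnj \<rho> * sigma_yy))
      = {#0, 0, complex_of_real e\<^sub>1, complex_of_real e\<^sub>2#}"
    unfolding assms(1) F(1) by (subst proots_mult, simp, simp)+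
  moreover have "image_mset (\<lambda>z. sqrt (Re z)) {#0, 0, complex_of_real e\<^sub>1, complex_of_real e\<^sub>2#}
      = mset [0, 0, sqrt e\<^sub>2, sqrt e\<^sub>1]"
    by (simp add: add_mset_commute)
  moreover have "sorted [0, 0, sqrt e\<^sub>2, sqrt e\<^sub>1]" using F(4,5) by simp
  ultimately have "concurrence \<rho> = sqrt e\<^sub>1 - sqrt e\<^sub>2"
    unfolding concurrence_def Let_def sigma_yy_def[symmetric] using F(4,5)
    by (simp add: sorted_sort_id)
  moreover have "(sqrt e\<^sub>1 - sqrt e\<^sub>2)\<^sup>2 = e\<^sub>1 + e\<^sub>2 - 2 * sqrt (e\<^sub>1 * e\<^sub>2)"
    using F(4,5) by (simp add: power2_diff real_sqrt_mult)
  ultimately show ?thesis unfolding F(2,3) by simp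
qed

definition yy_sign :: "nat \<Rightarrow> complex" where
  "yy_sign i = (if i = 0 \<or> i = 3 then -1 else 1)"

lemma sigma_yy_carrier [simp]: "sigma_yy \<in> carrier_mat 4 4"
  by (simp add: sigma_yy_def kron2_def)

lemma sigma_yy_dim [simp]: "dim_row sigma_yy = 4" "dim_col sigma_yy = 4"
  by (simp_all add: sigma_yy_def kron2_def)

lemma sigma_yy_entry:
  assumes "i < 4" "j < 4"
  shows "sigma_yy $$ (i, j) = (if i + j = 3 then yy_sign i else 0)"
  using less_4_cases[OF assms(1)] less_4_cases[OF assms(2)]
  by (auto simp: sigma_yy_def kron2_def pauli_def yy_sign_def mat_of_rows_list_def)

text \<open>\<open>yy_form u v = u\<^sup>T (\<sigma>\<^sub>y \<otimes> \<sigma>\<^sub>y) v\<close>; for a pure two-qubit state \<open>u\<close> the concurrence is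
  \<open>|yy_form u u|\<close>.\<close>

definition yy_form :: "(nat \<Rightarrow> complex) \<Rightarrow> (nat \<Rightarrow> complex) \<Rightarrow> complex" where
  "yy_form u v = - u 0 * v 3 + u 1 * v 2 + u 2 * v 1 - u 3 * v 0"

lemma yy_form_sym: "yy_form u v = yy_form v u"
  by (simp add: yy_form_def algebra_simps)

definition yy_gram_det :: "(nat \<Rightarrow> complex) \<Rightarrow> (nat \<Rightarrow> complex) \<Rightarrow> complex" where
  "yy_gram_det u v = yy_form u u * yy_form v v - (yy_form u v)\<^sup>2"

definition yy_gram_frob :: "(nat \<Rightarrow> complex) \<Rightarrow> (nat \<Rightarrow> complex) \<Rightarrow> real" where
  "yy_gram_frob u v = (cmod (yy_form u u))\<^sup>2 + 2 * (cmod (yy_form u v))\<^sup>2 + (cmod (yy_form v v))\<^sup>2"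

definition rank2 :: "(nat \<Rightarrow> complex) \<Rightarrow> (nat \<Rightarrow> complex) \<Rightarrow> complex mat" where
  "rank2 u v = mat 4 4 (\<lambda>(i, j). u i * cnj (u j) + v i * cnj (v j))"

lemma rank2_carrier [simp]: "rank2 u v \<in> carrier_mat 4 4"
  by (simp add: rank2_def)

lemma rank2_hermitian: "hermitian_on 4 (\<lambda>i j. rank2 u v $$ (i, j))"
  by (simp add: hermitian_on_def rank2_def)

lemma rank2_mult:
  assumes "T \<in> carrier_mat 4 4"
  shows "rank2 u v * T = mat 4 4 (\<lambda>(i, j).
    u i * (\<Sum>l<4. cnj (u l) * T $$ (l, j)) + v i * (\<Sum>l<4. cnj (v l) * T $$ (l, j)))"
  using assms
  by (intro eq_matI) (auto simp: rank2_def scalar_prod_def lessThan_atLeast0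
      sum_distrib_left sum.distrib algebra_simps)

lemma spin_flip_rank2_entry:
  assumes "k < 4" "j < 4"
  shows "(sigma_yy * map_mat cnj (rank2 u v) * sigma_yy) $$ (k, j)
    = yy_sign k * yy_sign j * (cnj (u (3 - k)) * u (3 - j) + cnj (v (3 - k)) * v (3 - j))"
  using less_4_cases[OF assms(1)] less_4_cases[OF assms(2)]
  by (auto simp: rank2_def sigma_yy_entry scalar_prod_def eval_nat_numeral yy_sign_def)

lemma spin_flip_rank2_bilinear:
  "(\<Sum>i<4. (\<Sum>l<4. cnj (w l) * (sigma_yy * map_mat cnj (rank2 u v) * sigma_yy) $$ (l, i)) * w' i)
     = cnj (yy_form w u) * yy_form u w' + cnj (yy_form w v) * yy_form v w'"
proof -
  define T where "T = sigma_yy * map_mat cnj (rank2 u v) * sigma_yy"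
  have T_entry: "T $$ (l, i) = yy_sign l * yy_sign i * (cnj (u (3 - l)) * u (3 - i) + cnj (v (3 - l)) * v (3 - i))"
    if "l < 4" "i < 4" for l i
    unfolding T_def by (rule spin_flip_rank2_entry[OF that])
  have "(\<Sum>i<4. (\<Sum>l<4. cnj (w l) * T $$ (l, i)) * w' i)
      = (\<Sum>i<4. (\<Sum>l<4. cnj (w l) * (yy_sign l * yy_sign i
          * (cnj (u (3 - l)) * u (3 - i) + cnj (v (3 - l)) * v (3 - i)))) * w' i)"
    by (simp add: T_entry)
  also have "\<dots> = cnj (yy_form w u) * yy_form u w' + cnj (yy_form w v) * yy_form v w'"
    by (simp add: eval_nat_numeral yy_sign_def yy_form_def algebra_simps)
  finally show ?thesis unfolding T_def .
qed

lemma char_poly_spin_flip_rank2: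
  "char_poly (rank2 u v * sigma_yy * map_mat cnj (rank2 u v) * sigma_yy) =
    [:0, 0, complex_of_real ((cmod (yy_gram_det u v))\<^sup>2), - complex_of_real (yy_gram_frob u v), 1:]"
proof -
  define T where "T = sigma_yy * map_mat cnj (rank2 u v) * sigma_yy"
  have cnj_car: "map_mat cnj (rank2 u v) \<in> carrier_mat 4 4" by simp
  then have T_car: "T \<in> carrier_mat 4 4" unfolding T_def by (meson mult_carrier_mat sigma_yy_carrier)
  have "rank2 u v * sigma_yy * map_mat cnj (rank2 u v) * sigma_yy = rank2 u v * T"
    unfolding T_def assoc_mult_mat[OF rank2_carrier sigma_yy_carrier cnj_car]
    by (rule assoc_mult_mat[OF rank2_carrier mult_carrier_mat[OF sigma_yy_carrier cnj_car] sigma_yy_carrier])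
  also have "\<dots> = mat 4 4 (\<lambda>(i, j). u i * (\<Sum>l<4. cnj (u l) * T $$ (l, j)) + v i * (\<Sum>l<4. cnj (v l) * T $$ (l, j)))"
    by (rule rank2_mult[OF T_car])
  finally have R: "rank2 u v * sigma_yy * map_mat cnj (rank2 u v) * sigma_yy = \<dots>" .
  have B: "(\<Sum>i<4. (\<Sum>l<4. cnj (w l) * T $$ (l, i)) * w' i)
      = cnj (yy_form w u) * yy_form u w' + cnj (yy_form w v) * yy_form v w'" for w w'
    unfolding T_def by (rule spin_flip_rank2_bilinear)
  show ?thesis
    unfolding R char_poly_rank_two B yy_form_sym[of v u] yy_gram_det_def yy_gram_frob_def
      of_real_add of_real_mult complex_norm_square
    by (simp add: algebra_simps power2_eq_square)
qed

lemma concurrence_rank2: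
  "(concurrence (rank2 u v))\<^sup>2 = yy_gram_frob u v - 2 * cmod (yy_gram_det u v)"
proof -
  define A B C where "A = yy_form u u" and "B = yy_form u v" and "C = yy_form v v"
  have "cmod (A * C - B\<^sup>2) \<le> cmod A * cmod C + (cmod B)\<^sup>2"
    by (metis norm_mult norm_power norm_triangle_ineq4)
  moreover have "2 * (cmod A * cmod C) \<le> (cmod A)\<^sup>2 + (cmod C)\<^sup>2"
    by (metis add.commute mult.assoc sum_squares_bound)
  ultimately have "2 * cmod (yy_gram_det u v) \<le> yy_gram_frob u v"
    unfolding yy_gram_det_def yy_gram_frob_def A_def B_def C_def by argo
  then have "4 * (cmod (yy_gram_det u v))\<^sup>2 \<le> (yy_gram_frob u v)\<^sup>2"
    using power_mono[of "2 * cmod (yy_gram_det u v)" "yy_gram_frob u v" 2]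
    by (simp add: power_mult_distrib)
  then show ?thesis
    using concurrence_of_char_poly[OF char_poly_spin_flip_rank2] by (simp add: yy_gram_frob_def)
qed

subsection \<open>Pure three-qubit states\<close>

text \<open>Amplitudes \<open>x\<close> of a three-qubit vector are indexed by \<open>4a + 2b + c\<close>, as in the
  reduced states of the definitions. \<open>branch_AB x c\<close> is the (unnormalised) state of the
  pair \<open>AB\<close> in the branch \<open>C = c\<close>, so that
  \<open>\<rho>\<^sub>A\<^sub>B = rank2 (branch_AB x 0) (branch_AB x 1)\<close>; likewise for the other pairs.\<close>

definition branch_AB :: "(nat \<Rightarrow> complex) \<Rightarrow> nat \<Rightarrow> nat \<Rightarrow> complex" where
  "branch_AB x c i = x (2 * i + c)"

definition branch_AC :: "(nat \<Rightarrow> complex) \<Rightarrow> nat \<Rightarrow> nat \<Rightarrow> complex" where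
  "branch_AC x b i = x (4 * (i div 2) + 2 * b + i mod 2)"

definition branch_BC :: "(nat \<Rightarrow> complex) \<Rightarrow> nat \<Rightarrow> nat \<Rightarrow> complex" where
  "branch_BC x a i = x (4 * a + i)"

lemma branch_AB_eval:
  "branch_AB x 0 0 = x 0" "branch_AB x 0 1 = x 2" "branch_AB x 0 2 = x 4" "branch_AB x 0 3 = x 6"
  "branch_AB x 1 0 = x 1" "branch_AB x 1 1 = x 3" "branch_AB x 1 2 = x 5" "branch_AB x 1 3 = x 7"
  by (simp_all add: branch_AB_def del: One_nat_def add_2_eq_Suc add_2_eq_Suc')

lemma branch_AC_eval:
  "branch_AC x 0 0 = x 0" "branch_AC x 0 1 = x 1" "branch_AC x 0 2 = x 4" "branch_AC x 0 3 = x 5"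
  "branch_AC x 1 0 = x 2" "branch_AC x 1 1 = x 3" "branch_AC x 1 2 = x 6" "branch_AC x 1 3 = x 7"
  by (simp_all add: branch_AC_def del: One_nat_def add_2_eq_Suc add_2_eq_Suc')

lemma branch_BC_eval:
  "branch_BC x 0 0 = x 0" "branch_BC x 0 1 = x 1" "branch_BC x 0 2 = x 2" "branch_BC x 0 3 = x 3"
  "branch_BC x 1 0 = x 4" "branch_BC x 1 1 = x 5" "branch_BC x 1 2 = x 6" "branch_BC x 1 3 = x 7"
  by (simp_all add: branch_BC_def del: One_nat_def add_2_eq_Suc add_2_eq_Suc')

lemmas branch_eval = branch_AB_eval branch_AC_eval branch_BC_eval

definition amp_norm_sq :: "(nat \<Rightarrow> complex) \<Rightarrow> real" where
  "amp_norm_sq x = (\<Sum>i<8. (cmod (x i))\<^sup>2)"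

definition reduced_A :: "(nat \<Rightarrow> complex) \<Rightarrow> complex mat" where
  "reduced_A x = mat 2 2 (\<lambda>(i, j). \<Sum>b<2. \<Sum>c<2. x (4*i + 2*b + c) * cnj (x (4*j + 2*b + c)))"

definition reduced_B :: "(nat \<Rightarrow> complex) \<Rightarrow> complex mat" where
  "reduced_B x = mat 2 2 (\<lambda>(i, j). \<Sum>a<2. \<Sum>c<2. x (4*a + 2*i + c) * cnj (x (4*a + 2*j + c)))"

definition reduced_C :: "(nat \<Rightarrow> complex) \<Rightarrow> complex mat" where
  "reduced_C x = mat 2 2 (\<lambda>(i, j). \<Sum>a<2. \<Sum>b<2. x (4*a + 2*b + i) * cnj (x (4*a + 2*b + j)))"

lemma reduced_carrier [simp]:
  "reduced_A x \<in> carrier_mat 2 2" "reduced_B x \<in> carrier_mat 2 2" "reduced_C x \<in> carrier_mat 2 2"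
  by (simp_all add: reduced_A_def reduced_B_def reduced_C_def)

lemma reduced_hermitian:
  "hermitian_on 2 (\<lambda>i j. reduced_A x $$ (i, j))"
  "hermitian_on 2 (\<lambda>i j. reduced_B x $$ (i, j))"
  "hermitian_on 2 (\<lambda>i j. reduced_C x $$ (i, j))"
  by (simp_all add: hermitian_on_def reduced_A_def reduced_B_def reduced_C_def mult.commute)

lemma mtrace_reduced:
  "mtrace (reduced_A x) = complex_of_real (amp_norm_sq x)"
  "mtrace (reduced_B x) = complex_of_real (amp_norm_sq x)"
  "mtrace (reduced_C x) = complex_of_real (amp_norm_sq x)"
  unfolding amp_norm_sq_def of_real_sum complex_norm_square
  by (simp_all add: mtrace_def reduced_A_def reduced_B_def reduced_C_def sum_lessThan_2 sum_lessThan_8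
      algebra_simps del: One_nat_def add_2_eq_Suc add_2_eq_Suc')

lemma partial_trace_AB:
  assumes "M \<in> carrier_mat 2 2"
  shows "mtrace (rank2 (branch_AB x 0) (branch_AB x 1) * kron2 M (pauli 0)) = mtrace (reduced_A x * M)"
    and "mtrace (rank2 (branch_AB x 0) (branch_AB x 1) * kron2 (pauli 0) M) = mtrace (reduced_B x * M)"
  using assms
  by (simp_all add: mtrace_mult_kron2 mtrace_mult_2 pauli_entries rank2_def reduced_A_def reduced_B_def
      branch_AB_eval sum_lessThan_2 algebra_simps del: One_nat_def add_2_eq_Suc add_2_eq_Suc')

lemma partial_trace_AC:
  assumes "M \<in> carrier_mat 2 2"
  shows "mtrace (rank2 (branch_AC x 0) (branch_AC x 1) * kron2 M (pauli 0)) = mtrace (reduced_A x * M)"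
    and "mtrace (rank2 (branch_AC x 0) (branch_AC x 1) * kron2 (pauli 0) M) = mtrace (reduced_C x * M)"
  using assms
  by (simp_all add: mtrace_mult_kron2 mtrace_mult_2 pauli_entries rank2_def reduced_A_def reduced_C_def
      branch_AC_eval sum_lessThan_2 algebra_simps del: One_nat_def add_2_eq_Suc add_2_eq_Suc')

lemma partial_trace_BC:
  assumes "M \<in> carrier_mat 2 2"
  shows "mtrace (rank2 (branch_BC x 0) (branch_BC x 1) * kron2 M (pauli 0)) = mtrace (reduced_B x * M)"
    and "mtrace (rank2 (branch_BC x 0) (branch_BC x 1) * kron2 (pauli 0) M) = mtrace (reduced_C x * M)"
  using assms
  by (simp_all add: mtrace_mult_kron2 mtrace_mult_2 pauli_entries rank2_def reduced_B_def reduced_C_def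
      branch_BC_eval sum_lessThan_2 algebra_simps del: One_nat_def add_2_eq_Suc add_2_eq_Suc')

lemma frob_sq_rank2_branches:
  "frob_sq 4 (rank2 (branch_AB x 0) (branch_AB x 1)) = frob_sq 2 (reduced_C x)"
  "frob_sq 4 (rank2 (branch_AC x 0) (branch_AC x 1)) = frob_sq 2 (reduced_B x)"
  "frob_sq 4 (rank2 (branch_BC x 0) (branch_BC x 1)) = frob_sq 2 (reduced_A x)"
proof -
  have "complex_of_real (frob_sq 4 (rank2 (branch_AB x 0) (branch_AB x 1))) = complex_of_real (frob_sq 2 (reduced_C x))"
    "complex_of_real (frob_sq 4 (rank2 (branch_AC x 0) (branch_AC x 1))) = complex_of_real (frob_sq 2 (reduced_B x))"
    "complex_of_real (frob_sq 4 (rank2 (branch_BC x 0) (branch_BC x 1))) = complex_of_real (frob_sq 2 (reduced_A x))"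
    unfolding frob_sq_def of_real_sum complex_norm_square rank2_def reduced_A_def reduced_B_def reduced_C_def
    by (simp_all add: sum_lessThan_4 sum_lessThan_2 branch_eval algebra_simps
        del: One_nat_def add_2_eq_Suc add_2_eq_Suc')
  then show "frob_sq 4 (rank2 (branch_AB x 0) (branch_AB x 1)) = frob_sq 2 (reduced_C x)"
    "frob_sq 4 (rank2 (branch_AC x 0) (branch_AC x 1)) = frob_sq 2 (reduced_B x)"
    "frob_sq 4 (rank2 (branch_BC x 0) (branch_BC x 1)) = frob_sq 2 (reduced_A x)"
    by (simp_all only: of_real_eq_iff)
qed

lemma yy_gram_frob_branches:
  "yy_gram_frob (branch_AB x 0) (branch_AB x 1)
     = (amp_norm_sq x)\<^sup>2 + frob_sq 2 (reduced_C x) - frob_sq 2 (reduced_A x) - frob_sq 2 (reduced_B x)"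
  "yy_gram_frob (branch_AC x 0) (branch_AC x 1)
     = (amp_norm_sq x)\<^sup>2 + frob_sq 2 (reduced_B x) - frob_sq 2 (reduced_A x) - frob_sq 2 (reduced_C x)"
  "yy_gram_frob (branch_BC x 0) (branch_BC x 1)
     = (amp_norm_sq x)\<^sup>2 + frob_sq 2 (reduced_A x) - frob_sq 2 (reduced_B x) - frob_sq 2 (reduced_C x)"
proof -
  have "complex_of_real (amp_norm_sq x) = (\<Sum>i<8. x i * cnj (x i))"
    unfolding amp_norm_sq_def of_real_sum complex_norm_square ..
  then have norm: "complex_of_real ((amp_norm_sq x)\<^sup>2) = (\<Sum>i<8. x i * cnj (x i))\<^sup>2"
    by (metis of_real_power)
  have "complex_of_real (yy_gram_frob (branch_AB x 0) (branch_AB x 1))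
     = complex_of_real ((amp_norm_sq x)\<^sup>2 + frob_sq 2 (reduced_C x) - frob_sq 2 (reduced_A x) - frob_sq 2 (reduced_B x))"
    "complex_of_real (yy_gram_frob (branch_AC x 0) (branch_AC x 1))
     = complex_of_real ((amp_norm_sq x)\<^sup>2 + frob_sq 2 (reduced_B x) - frob_sq 2 (reduced_A x) - frob_sq 2 (reduced_C x))"
    "complex_of_real (yy_gram_frob (branch_BC x 0) (branch_BC x 1))
     = complex_of_real ((amp_norm_sq x)\<^sup>2 + frob_sq 2 (reduced_A x) - frob_sq 2 (reduced_B x) - frob_sq 2 (reduced_C x))"
    unfolding of_real_add of_real_diff norm yy_gram_frob_def frob_sq_def of_real_sum of_real_mult
      complex_norm_square reduced_A_def reduced_B_def reduced_C_def yy_form_def branch_eval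
    by (simp_all add: sum_lessThan_8 sum_lessThan_2 algebra_simps power2_eq_square
        del: One_nat_def add_2_eq_Suc add_2_eq_Suc')
  then show "yy_gram_frob (branch_AB x 0) (branch_AB x 1)
     = (amp_norm_sq x)\<^sup>2 + frob_sq 2 (reduced_C x) - frob_sq 2 (reduced_A x) - frob_sq 2 (reduced_B x)"
    "yy_gram_frob (branch_AC x 0) (branch_AC x 1)
     = (amp_norm_sq x)\<^sup>2 + frob_sq 2 (reduced_B x) - frob_sq 2 (reduced_A x) - frob_sq 2 (reduced_C x)"
    "yy_gram_frob (branch_BC x 0) (branch_BC x 1)
     = (amp_norm_sq x)\<^sup>2 + frob_sq 2 (reduced_A x) - frob_sq 2 (reduced_B x) - frob_sq 2 (reduced_C x)"
    by (simp_all only: of_real_eq_iff)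
qed

text \<open>Up to a constant factor \<open>yy_gram_det\<close> of the branches is Cayley's hyperdeterminant,
  which is invariant under permuting the qubits.\<close>

lemma yy_gram_det_branches:
  "yy_gram_det (branch_AB x 0) (branch_AB x 1) = yy_gram_det (branch_BC x 0) (branch_BC x 1)"
  "yy_gram_det (branch_AC x 0) (branch_AC x 1) = yy_gram_det (branch_BC x 0) (branch_BC x 1)"
  unfolding yy_gram_det_def yy_form_def branch_eval
  by (simp_all add: algebra_simps power2_eq_square)

lemma purity_qubit_ge:
  assumes "r \<in> carrier_mat 2 2" "hermitian_on 2 (\<lambda>i j. r $$ (i, j))" "mtrace r = 1"
  shows "1 \<le> 2 * frob_sq 2 r"
proof -
  have "Re (mtrace (r * pauli 0)) = 1" using assms(1,3) by (simp add: pauli_0)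
  then have "(\<Sum>k<4. (Re (mtrace (r * pauli k)))\<^sup>2) = 1 + (\<Sum>k\<in>{1..3}. (Re (mtrace (r * pauli k)))\<^sup>2)"
    unfolding sum_lessThan_4 sum_atLeastAtMost_1_3 by simp
  moreover have "0 \<le> (\<Sum>k\<in>{1..3}. (Re (mtrace (r * pauli k)))\<^sup>2)" by (simp add: sum_nonneg)
  ultimately show ?thesis using sum_sq_pauli_trace[OF assms(1,2)] by linarith
qed

context
  fixes x :: "nat \<Rightarrow> complex"
  assumes normalised: "amp_norm_sq x = 1"
begin

lemma mtrace_reduced_normalised:
  "mtrace (reduced_A x) = 1" "mtrace (reduced_B x) = 1" "mtrace (reduced_C x) = 1"
  using normalised by (simp_all add: mtrace_reduced)

lemma Scorr_branches:
  "Scorr (rank2 (branch_AB x 0) (branch_AB x 1))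
     = 1 + 4 * frob_sq 2 (reduced_C x) - 2 * frob_sq 2 (reduced_A x) - 2 * frob_sq 2 (reduced_B x)"
  "Scorr (rank2 (branch_AC x 0) (branch_AC x 1))
     = 1 + 4 * frob_sq 2 (reduced_B x) - 2 * frob_sq 2 (reduced_A x) - 2 * frob_sq 2 (reduced_C x)"
  "Scorr (rank2 (branch_BC x 0) (branch_BC x 1))
     = 1 + 4 * frob_sq 2 (reduced_A x) - 2 * frob_sq 2 (reduced_B x) - 2 * frob_sq 2 (reduced_C x)"
  using Scorr_eq_purities[OF rank2_carrier rank2_hermitian reduced_carrier(1) reduced_hermitian(1)
      mtrace_reduced_normalised(1) reduced_carrier(2) reduced_hermitian(2) partial_trace_AB]
    Scorr_eq_purities[OF rank2_carrier rank2_hermitian reduced_carrier(1) reduced_hermitian(1)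
      mtrace_reduced_normalised(1) reduced_carrier(3) reduced_hermitian(3) partial_trace_AC]
    Scorr_eq_purities[OF rank2_carrier rank2_hermitian reduced_carrier(2) reduced_hermitian(2)
      mtrace_reduced_normalised(2) reduced_carrier(3) reduced_hermitian(3) partial_trace_BC]
  unfolding frob_sq_rank2_branches by simp_all

lemma concurrence_branches:
  defines "q \<equiv> cmod (yy_gram_det (branch_BC x 0) (branch_BC x 1))"
  shows "(concurrence (rank2 (branch_AB x 0) (branch_AB x 1)))\<^sup>2
      = 1 + frob_sq 2 (reduced_C x) - frob_sq 2 (reduced_A x) - frob_sq 2 (reduced_B x) - 2 * q"
    "(concurrence (rank2 (branch_AC x 0) (branch_AC x 1)))\<^sup>2
      = 1 + frob_sq 2 (reduced_B x) - frob_sq 2 (reduced_A x) - frob_sq 2 (reduced_C x) - 2 * q"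
    "(concurrence (rank2 (branch_BC x 0) (branch_BC x 1)))\<^sup>2
      = 1 + frob_sq 2 (reduced_A x) - frob_sq 2 (reduced_B x) - frob_sq 2 (reduced_C x) - 2 * q"
  unfolding concurrence_rank2 yy_gram_frob_branches yy_gram_det_branches normalised q_def by simp_all

end

lemma proj_reduced:
  assumes "\<psi> \<in> carrier_vec 8"
  shows "rho_AB (proj \<psi>) = rank2 (branch_AB (vec_index \<psi>) 0) (branch_AB (vec_index \<psi>) 1)"
    and "rho_AC (proj \<psi>) = rank2 (branch_AC (vec_index \<psi>) 0) (branch_AC (vec_index \<psi>) 1)"
    and "rho_BC (proj \<psi>) = rank2 (branch_BC (vec_index \<psi>) 0) (branch_BC (vec_index \<psi>) 1)"
    and "rho_A (proj \<psi>) = reduced_A (vec_index \<psi>)"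
proof -
  have idx_AC: "4 * (k div 2) + 2 + k mod 2 < 8" "4 * (k div 2) + k mod 2 < 8" if "k < 4" for k :: nat
    using less_4_cases[OF that] by auto
  have idx_A: "4 * k + 2 * b + c < 8" if "k < 2" "b < 2" "c < 2" for k b c :: nat
    using that by linarith
  show "rho_AB (proj \<psi>) = rank2 (branch_AB (vec_index \<psi>) 0) (branch_AB (vec_index \<psi>) 1)"
    using assms by (intro eq_matI) (simp_all add: rho_AB_def rank2_def branch_AB_def sum_lessThan_2 proj_def)
  show "rho_AC (proj \<psi>) = rank2 (branch_AC (vec_index \<psi>) 0) (branch_AC (vec_index \<psi>) 1)"
  proof (rule eq_matI)
    fix i j assume "i < dim_row (rank2 (branch_AC (vec_index \<psi>) 0) (branch_AC (vec_index \<psi>) 1))"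
      "j < dim_col (rank2 (branch_AC (vec_index \<psi>) 0) (branch_AC (vec_index \<psi>) 1))"
    then have ij: "i < 4" "j < 4" by (simp_all add: rank2_def)
    have proj_entry: "proj \<psi> $$ (a, b) = \<psi> $ a * cnj (\<psi> $ b)" if "a < 8" "b < 8" for a b
      using that by (simp add: proj_def)
    show "rho_AC (proj \<psi>) $$ (i, j) = rank2 (branch_AC (vec_index \<psi>) 0) (branch_AC (vec_index \<psi>) 1) $$ (i, j)"
      using ij idx_AC[OF ij(1)] idx_AC[OF ij(2)]
      by (simp add: rho_AC_def rank2_def branch_AC_def sum_lessThan_2 proj_entry add.commute add.left_commute)
  qed (simp_all add: rho_AC_def rank2_def)
  show "rho_BC (proj \<psi>) = rank2 (branch_BC (vec_index \<psi>) 0) (branch_BC (vec_index \<psi>) 1)"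
    using assms by (intro eq_matI) (simp_all add: rho_BC_def rank2_def branch_BC_def sum_lessThan_2 proj_def)
  show "rho_A (proj \<psi>) = reduced_A (vec_index \<psi>)"
    using assms idx_A by (intro eq_matI) (simp_all add: rho_A_def reduced_A_def proj_def)
qed

lemma bloch_A_sq_sum:
  assumes "unit_vec8 \<psi>"
  shows "(\<Sum>k\<in>{1..3}. (bloch_A (proj \<psi>) k)\<^sup>2) = 2 * frob_sq 2 (reduced_A (vec_index \<psi>)) - 1"
proof -
  have car: "\<psi> \<in> carrier_vec 8" and "amp_norm_sq (vec_index \<psi>) = 1"
    using assms unfolding unit_vec8_def amp_norm_sq_def by simp_all
  then have "Re (mtrace (reduced_A (vec_index \<psi>) * pauli 0)) = 1"
    by (simp add: pauli_0 mtrace_reduced right_mult_one_mat[OF reduced_carrier(1)])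
  then show ?thesis
    using sum_sq_pauli_trace[OF reduced_carrier(1) reduced_hermitian(1), of "vec_index \<psi>"]
    unfolding bloch_A_def proj_reduced(4)[OF car] sum_lessThan_4 sum_atLeastAtMost_1_3 by simp
qed

lemma tangle_pure_eq_yy_gram_det:
  assumes "unit_vec8 \<psi>"
  shows "tangle_pure \<psi> = 4 * cmod (yy_gram_det (branch_BC (vec_index \<psi>) 0) (branch_BC (vec_index \<psi>) 1))"
proof -
  have car: "\<psi> \<in> carrier_vec 8" and norm: "amp_norm_sq (vec_index \<psi>) = 1"
    using assms unfolding unit_vec8_def amp_norm_sq_def by simp_all
  show ?thesis
    unfolding tangle_pure_def bloch_A_sq_sum[OF assms] proj_reduced[OF car] concurrence_branches[OF norm]
    by simp
qed

lemma pure_state_bound: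
  assumes "unit_vec8 \<psi>"
  shows "S_max_total (proj \<psi>) + tangle_pure \<psi> \<le> 3"
proof -
  define x where "x = vec_index \<psi>"
  have car: "\<psi> \<in> carrier_vec 8" and norm: "amp_norm_sq x = 1"
    using assms unfolding unit_vec8_def amp_norm_sq_def x_def by simp_all
  define P\<^sub>A P\<^sub>B P\<^sub>C where "P\<^sub>A = frob_sq 2 (reduced_A x)" and "P\<^sub>B = frob_sq 2 (reduced_B x)"
    and "P\<^sub>C = frob_sq 2 (reduced_C x)"
  define S\<^sub>A\<^sub>B S\<^sub>A\<^sub>C S\<^sub>B\<^sub>C where "S\<^sub>A\<^sub>B = Scorr (rho_AB (proj \<psi>))"
    and "S\<^sub>A\<^sub>C = Scorr (rho_AC (proj \<psi>))" and "S\<^sub>B\<^sub>C = Scorr (rho_BC (proj \<psi>))"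
  define q where "q = cmod (yy_gram_det (branch_BC x 0) (branch_BC x 1))"
  have S: "S\<^sub>A\<^sub>B = 1 + 4 * P\<^sub>C - 2 * P\<^sub>A - 2 * P\<^sub>B" "S\<^sub>A\<^sub>C = 1 + 4 * P\<^sub>B - 2 * P\<^sub>A - 2 * P\<^sub>C"
    "S\<^sub>B\<^sub>C = 1 + 4 * P\<^sub>A - 2 * P\<^sub>B - 2 * P\<^sub>C"
    unfolding S\<^sub>A\<^sub>B_def S\<^sub>A\<^sub>C_def S\<^sub>B\<^sub>C_def P\<^sub>A_def P\<^sub>B_def P\<^sub>C_def proj_reduced[OF car] x_def[symmetric]
    by (simp_all only: Scorr_branches[OF norm])
  have "0 \<le> 1 + P\<^sub>C - P\<^sub>A - P\<^sub>B - 2 * q" "0 \<le> 1 + P\<^sub>B - P\<^sub>A - P\<^sub>C - 2 * q"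
    "0 \<le> 1 + P\<^sub>A - P\<^sub>B - P\<^sub>C - 2 * q"
    unfolding P\<^sub>A_def P\<^sub>B_def P\<^sub>C_def q_def concurrence_branches(1-3)[OF norm, symmetric] by simp_all
  moreover have "1 \<le> 2 * P\<^sub>A" "1 \<le> 2 * P\<^sub>B" "1 \<le> 2 * P\<^sub>C"
    unfolding P\<^sub>A_def P\<^sub>B_def P\<^sub>C_def
    using purity_qubit_ge[OF reduced_carrier(1) reduced_hermitian(1) mtrace_reduced_normalised(1)[OF norm]]
      purity_qubit_ge[OF reduced_carrier(2) reduced_hermitian(2) mtrace_reduced_normalised(2)[OF norm]]
      purity_qubit_ge[OF reduced_carrier(3) reduced_hermitian(3) mtrace_reduced_normalised(3)[OF norm]]
    by simp_all
  moreover have "tangle_pure \<psi> = 4 * q"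
    unfolding q_def x_def by (rule tangle_pure_eq_yy_gram_det[OF assms])
  \<comment> \<open>e.g.\ \<open>S\<^sub>A\<^sub>B + S\<^sub>A\<^sub>C + \<tau> = 3 - |a|\<^sup>2 - 2 C\<^sub>B\<^sub>C\<^sup>2\<close> with \<open>|a|\<^sup>2 = 2 P\<^sub>A - 1\<close>\<close>
  ultimately have "S\<^sub>A\<^sub>B + S\<^sub>A\<^sub>C + tangle_pure \<psi> \<le> 3" "S\<^sub>A\<^sub>B + S\<^sub>B\<^sub>C + tangle_pure \<psi> \<le> 3"
    "S\<^sub>A\<^sub>C + S\<^sub>B\<^sub>C + tangle_pure \<psi> \<le> 3"
    unfolding S by linarith+
  then show ?thesis unfolding S_max_total_def S\<^sub>A\<^sub>B_def S\<^sub>A\<^sub>C_def S\<^sub>B\<^sub>C_def by simp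
qed

subsection \<open>Mixed states\<close>

lemma weighted_mean_sq_le:
  fixes p t :: "nat \<Rightarrow> real"
  assumes "\<And>n. n < m \<Longrightarrow> 0 \<le> p n" "(\<Sum>n<m. p n) = 1"
  shows "(\<Sum>n<m. p n * t n)\<^sup>2 \<le> (\<Sum>n<m. p n * (t n)\<^sup>2)"
proof -
  define c where "c = (\<Sum>n<m. p n * t n)"
  have "0 \<le> (\<Sum>n<m. p n * (t n - c)\<^sup>2)" using assms(1) by (intro sum_nonneg) simp
  also have "\<dots> = (\<Sum>n<m. p n * (t n)\<^sup>2) - 2 * c * (\<Sum>n<m. p n * t n) + c\<^sup>2 * (\<Sum>n<m. p n)"
    by (simp add: power2_diff algebra_simps sum.distrib sum_subtractf sum_distrib_left sum_distrib_right)
  finally show ?thesis using assms(2) unfolding c_def by (simp add: power2_eq_square)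
qed

lemma corr_mixture:
  fixes p :: "nat \<Rightarrow> real"
  assumes r: "r \<in> carrier_mat 4 4" and R: "\<And>n. R n \<in> carrier_mat 4 4"
    and mix: "\<And>i j. i < 4 \<Longrightarrow> j < 4 \<Longrightarrow> r $$ (i, j) = (\<Sum>n<m. complex_of_real (p n) * R n $$ (i, j))"
  shows "corr r k l = (\<Sum>n<m. p n * corr (R n) k l)"
proof -
  have tr: "mtrace (A * kron2 (pauli k) (pauli l))
      = (\<Sum>i<4. \<Sum>j<4. A $$ (i, j) * kron2 (pauli k) (pauli l) $$ (j, i))"
    if "A \<in> carrier_mat 4 4" for A
    using that by (simp add: mtrace_def kron2_def scalar_prod_def lessThan_atLeast0)
  have "mtrace (r * kron2 (pauli k) (pauli l))
      = (\<Sum>i<4. \<Sum>j<4. (\<Sum>n<m. complex_of_real (p n) * R n $$ (i, j)) * kron2 (pauli k) (pauli l) $$ (j, i))"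
    unfolding tr[OF r] by (intro sum.cong refl) (simp add: mix)
  also have "\<dots> = (\<Sum>n<m. complex_of_real (p n) * mtrace (R n * kron2 (pauli k) (pauli l)))"
    unfolding tr[OF R] sum_distrib_right sum_distrib_left
    by (subst sum.swap, subst (2) sum.swap) (simp add: algebra_simps)
  finally show ?thesis unfolding corr_def by (simp add: Re_sum)
qed

lemma Scorr_mixture_le:
  fixes p :: "nat \<Rightarrow> real"
  assumes "r \<in> carrier_mat 4 4" "\<And>n. R n \<in> carrier_mat 4 4"
    and "\<And>i j. i < 4 \<Longrightarrow> j < 4 \<Longrightarrow> r $$ (i, j) = (\<Sum>n<m. complex_of_real (p n) * R n $$ (i, j))"
    and p: "\<And>n. n < m \<Longrightarrow> 0 \<le> p n" "(\<Sum>n<m. p n) = 1"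
  shows "Scorr r \<le> (\<Sum>n<m. p n * Scorr (R n))"
proof -
  have "Scorr r = (\<Sum>k\<in>{1..3}. \<Sum>l\<in>{1..3}. (\<Sum>n<m. p n * corr (R n) k l)\<^sup>2)"
    unfolding Scorr_def using corr_mixture[OF assms(1-3)] by simp
  also have "\<dots> \<le> (\<Sum>k\<in>{1..3}. \<Sum>l\<in>{1..3}. \<Sum>n<m. p n * (corr (R n) k l)\<^sup>2)"
    by (intro sum_mono weighted_mean_sq_le p) auto
  also have "\<dots> = (\<Sum>n<m. p n * Scorr (R n))"
    unfolding Scorr_def sum_distrib_left by (subst sum.swap, subst (2) sum.swap) simp
  finally show ?thesis .
qed

lemma reduced_pairs_mixture:
  fixes p :: "nat \<Rightarrow> real"
  assumes mix: "\<And>i j. i < 8 \<Longrightarrow> j < 8 \<Longrightarrow> \<rho> $$ (i, j) = (\<Sum>n<m. complex_of_real (p n) * R n $$ (i, j))"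
    and ij: "i < 4" "j < 4"
  shows "rho_AB \<rho> $$ (i, j) = (\<Sum>n<m. complex_of_real (p n) * rho_AB (R n) $$ (i, j))"
    and "rho_AC \<rho> $$ (i, j) = (\<Sum>n<m. complex_of_real (p n) * rho_AC (R n) $$ (i, j))"
    and "rho_BC \<rho> $$ (i, j) = (\<Sum>n<m. complex_of_real (p n) * rho_BC (R n) $$ (i, j))"
proof -
  have idx_AC: "4 * (k div 2) + 2 * b + k mod 2 < 8" if "k < 4" "b < 2" for k b :: nat
    using that less_4_cases[of k] by auto
  show "rho_AB \<rho> $$ (i, j) = (\<Sum>n<m. complex_of_real (p n) * rho_AB (R n) $$ (i, j))"
    using ij unfolding rho_AB_def by (simp add: mix sum_distrib_left) (rule sum.swap)
  show "rho_AC \<rho> $$ (i, j) = (\<Sum>n<m. complex_of_real (p n) * rho_AC (R n) $$ (i, j))"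
    using ij unfolding rho_AC_def by (simp add: mix idx_AC sum_distrib_left) (rule sum.swap)
  show "rho_BC \<rho> $$ (i, j) = (\<Sum>n<m. complex_of_real (p n) * rho_BC (R n) $$ (i, j))"
    using ij unfolding rho_BC_def by (simp add: mix sum_distrib_left) (rule sum.swap)
qed

definition decomp_tangle :: "(real \<times> complex vec) list \<Rightarrow> real" where
  "decomp_tangle d = (\<Sum>n<length d. fst (d ! n) * tangle_pure (snd (d ! n)))"

lemma decomp_tangle_nonneg:
  assumes "pure_decomp \<rho> d"
  shows "0 \<le> decomp_tangle d"
  using assms unfolding decomp_tangle_def pure_decomp_def
  by (intro sum_nonneg mult_nonneg_nonneg) (auto simp: tangle_pure_eq_yy_gram_det)

lemma S_max_total_add_decomp_tangle_le:
  assumes d: "pure_decomp \<rho> d"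
  shows "S_max_total \<rho> + decomp_tangle d \<le> 3"
proof -
  define m p R where "m = length d" and "p = (\<lambda>n. fst (d ! n))" and "R = (\<lambda>n. proj (snd (d ! n)))"
  have p0: "\<And>n. n < m \<Longrightarrow> 0 \<le> p n" and unit: "\<And>n. n < m \<Longrightarrow> unit_vec8 (snd (d ! n))"
    using d unfolding pure_decomp_def p_def m_def by (auto dest: nth_mem)
  have p1: "(\<Sum>n<m. p n) = 1" using d unfolding pure_decomp_def p_def m_def by simp
  have mix: "\<And>i j. i < 8 \<Longrightarrow> j < 8 \<Longrightarrow> \<rho> $$ (i, j) = (\<Sum>n<m. complex_of_real (p n) * R n $$ (i, j))"
    using d unfolding pure_decomp_def p_def m_def R_def by simp
  have car: "rho_AB r \<in> carrier_mat 4 4" "rho_AC r \<in> carrier_mat 4 4" "rho_BC r \<in> carrier_mat 4 4" for r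
    by (simp_all add: rho_AB_def rho_AC_def rho_BC_def)
  have S: "Scorr (rho_AB \<rho>) \<le> (\<Sum>n<m. p n * Scorr (rho_AB (R n)))"
    "Scorr (rho_AC \<rho>) \<le> (\<Sum>n<m. p n * Scorr (rho_AC (R n)))"
    "Scorr (rho_BC \<rho>) \<le> (\<Sum>n<m. p n * Scorr (rho_BC (R n)))"
    using Scorr_mixture_le[OF car(1) car(1) reduced_pairs_mixture(1)[OF mix] p0 p1]
      Scorr_mixture_le[OF car(2) car(2) reduced_pairs_mixture(2)[OF mix] p0 p1]
      Scorr_mixture_le[OF car(3) car(3) reduced_pairs_mixture(3)[OF mix] p0 p1]
    by simp_all
  have pair_le: "(\<Sum>n<m. p n * X n) + (\<Sum>n<m. p n * Y n) + decomp_tangle d \<le> 3"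
    if XY: "\<And>n. X n + Y n \<le> S_max_total (R n)" for X Y
  proof -
    have bound: "X n + Y n + tangle_pure (snd (d ! n)) \<le> 3" if "n < m" for n
      using XY[of n] pure_state_bound[OF unit[OF that]] unfolding R_def by linarith
    have "(\<Sum>n<m. p n * X n) + (\<Sum>n<m. p n * Y n) + decomp_tangle d
        = (\<Sum>n<m. p n * (X n + Y n + tangle_pure (snd (d ! n))))"
      unfolding decomp_tangle_def m_def p_def by (simp add: sum.distrib algebra_simps)
    also have "\<dots> \<le> (\<Sum>n<m. p n * 3)"
      using bound p0 by (intro sum_mono mult_left_mono) auto
    also have "\<dots> = 3" using p1 by (simp flip: sum_distrib_right)
    finally show ?thesis .
  qed
  have le_max: "Scorr (rho_AB r) + Scorr (rho_AC r) \<le> S_max_total r"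
    "Scorr (rho_AB r) + Scorr (rho_BC r) \<le> S_max_total r"
    "Scorr (rho_AC r) + Scorr (rho_BC r) \<le> S_max_total r" for r
    unfolding S_max_total_def by simp_all
  have "Scorr (rho_AB \<rho>) + Scorr (rho_AC \<rho>) + decomp_tangle d \<le> 3"
    using S(1,2) pair_le[of "\<lambda>n. Scorr (rho_AB (R n))" "\<lambda>n. Scorr (rho_AC (R n))", OF le_max(1)]
    by linarith
  moreover have "Scorr (rho_AB \<rho>) + Scorr (rho_BC \<rho>) + decomp_tangle d \<le> 3"
    using S(1,3) pair_le[of "\<lambda>n. Scorr (rho_AB (R n))" "\<lambda>n. Scorr (rho_BC (R n))", OF le_max(2)]
    by linarith
  moreover have "Scorr (rho_AC \<rho>) + Scorr (rho_BC \<rho>) + decomp_tangle d \<le> 3"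
    using S(2,3) pair_le[of "\<lambda>n. Scorr (rho_AC (R n))" "\<lambda>n. Scorr (rho_BC (R n))", OF le_max(3)]
    by linarith
  ultimately show ?thesis unfolding S_max_total_def by simp
qed

theorem theorem5:
  fixes \<rho> :: "complex mat"
  assumes "density_op 8 \<rho>"
  shows "S_max_total \<rho> + tangle \<rho> \<le> 3"
proof -
  obtain d where d: "pure_decomp \<rho> d" using density_op_pure_decomp_exists[OF assms] ..
  have "tangle \<rho> \<le> decomp_tangle d"
    unfolding tangle_def decomp_tangle_def[symmetric]
  proof (rule cInf_lower)
    show "decomp_tangle d \<in> {decomp_tangle d | d. pure_decomp \<rho> d}" using d by blast
    show "bdd_below {decomp_tangle d | d. pure_decomp \<rho> d}"
      by (rule bdd_belowI[of _ 0]) (auto simp: decomp_tangle_nonneg)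
  qed
  then show ?thesis using S_max_total_add_decomp_tangle_le[OF d] by simp
qed

end
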